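(* For every theory $\Sigma$ and every formula $A \Rightarrow B$: $\Sigma \vdash A \Rightarrow B$ if and only if $\Sigma \models A \Rightarrow B$.
   Context: $Y$ is a non-empty finite set of attributes and $\mathcal{T}_Y = \{y^i \mid y \in Y, i \in \mathbb{Z}\}$; $M + j = \{y^{i+j} \mid y^i \in M\}$. A formula is $A \Rightarrow B$ with $A,B$ finite subsets of $\mathcal{T}_Y$; $M \models A \Rightarrow B$ means that for every $i \in \mathbb{Z}$, $A+i \subseteq M$ implies $B+i \subseteq M$; $\Sigma \models A \Rightarrow B$ means $A \Rightarrow B$ is true in every $M \subseteq \mathcal{T}_Y$ in which all formulas of the theory $\Sigma$ are true. Deduction rules (for arbitrary finite $A,B,C,D \subseteq \mathcal{T}_Y$, $i \in \mathbb{Z}$): (Ax) infer $A \cup B \Rightarrow A$; (Cut) from $A \Rightarrow B$ and $B \cup C \Rightarrow D$ infer $A \cup C \Rightarrow D$; (Shf) from $A \Rightarrow B$ infer $A+i \Rightarrow B+i$. $\Sigma \vdash A \Rightarrow B$ means there is a finite sequence of formulas ending with $A \Rightarrow B$ in which each member is in $\Sigma$ or is the conclusion of one of these rules applied to earlier members. *)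

theory Defs
  imports Main
begin

text \<open>Temporal attributes y^i are represented as pairs (y, i) :: 'y \<times> int.
  A formula A \<Rightarrow> B is a pair (A, B) of finite sets of such attributes.\<close>

type_synonym 'y tattr = "'y \<times> int"
type_synonym 'y fml = "'y tattr set \<times> 'y tattr set"

definition shift :: "'y tattr set \<Rightarrow> int \<Rightarrow> 'y tattr set" where
  "shift M j = (\<lambda>(y, i). (y, i + j)) ` M"

definition is_fml :: "'y fml \<Rightarrow> bool" where
  "is_fml f \<longleftrightarrow> finite (fst f) \<and> finite (snd f)"

definition true_in :: "'y tattr set \<Rightarrow> 'y fml \<Rightarrow> bool" where
  "true_in M f \<longleftrightarrow> (\<forall>i::int. shift (fst f) i \<subseteq> M \<longrightarrow> shift (snd f) i \<subseteq> M)"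

definition sem_entails :: "'y fml set \<Rightarrow> 'y fml \<Rightarrow> bool" where
  "sem_entails \<Sigma> f \<longleftrightarrow> (\<forall>M. (\<forall>g\<in>\<Sigma>. true_in M g) \<longrightarrow> true_in M f)"

inductive provable :: "'y fml set \<Rightarrow> 'y fml \<Rightarrow> bool" for \<Sigma> where
  Hyp: "f \<in> \<Sigma> \<Longrightarrow> provable \<Sigma> f"
| Ax: "finite A \<Longrightarrow> finite B \<Longrightarrow> provable \<Sigma> (A \<union> B, A)"
| Cut: "finite C \<Longrightarrow> provable \<Sigma> (A, B) \<Longrightarrow> provable \<Sigma> (B \<union> C, D)
        \<Longrightarrow> provable \<Sigma> (A \<union> C, D)"
| Shf: "provable \<Sigma> (A, B) \<Longrightarrow> provable \<Sigma> (shift A i, shift B i)"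

end

theory Submission
  imports Defs
begin

text \<open>For completeness, the set
  \<open>M\<close> of all attributes \<open>t\<close> with \<open>\<Sigma> \<turnstile> A \<Rightarrow> {t}\<close> is a model of \<open>\<Sigma>\<close>: rule (Shf) makes
  it closed under shifted instances of the formulas of \<open>\<Sigma>\<close>, and (Cut) chains them.
  Since \<open>A \<subseteq> M\<close>, semantic entailment forces \<open>B \<subseteq> M\<close>, i.e. \<open>\<Sigma> \<turnstile> A \<Rightarrow> B\<close>.\<close>

lemma shift_0 [simp]: "shift A 0 = A"
  unfolding shift_def by auto

lemma shift_shift: "shift (shift A i) j = shift A (i + j)"
  unfolding shift_def by (force simp: image_image add.assoc)

lemma shift_Un: "shift (A \<union> B) i = shift A i \<union> shift B i"
  unfolding shift_def by auto

lemma finite_shift: "finite A \<Longrightarrow> finite (shift A i)"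
  unfolding shift_def by auto

lemma provable_sound: "provable \<Sigma> f \<Longrightarrow> sem_entails \<Sigma> f"
  unfolding sem_entails_def
proof (intro allI impI)
  fix M assume model: "\<forall>g\<in>\<Sigma>. true_in M g"
  assume "provable \<Sigma> f"
  then show "true_in M f"
  proof (induction rule: provable.induct)
    case (Hyp f)
    then show ?case using model by blast
  next
    case (Ax A B)
    then show ?case by (auto simp: true_in_def shift_Un)
  next
    case (Cut C A B D)
    then show ?case by (simp add: true_in_def shift_Un)
  next
    case (Shf A B i)
    then show ?case by (simp add: true_in_def shift_shift)
  qed
qed

lemma provable_subset: "finite A \<Longrightarrow> B \<subseteq> A \<Longrightarrow> provable \<Sigma> (A, B)"
  using provable.Ax[of B A \<Sigma>] by (simp add: Un_absorb1 finite_subset)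

lemma provable_trans:
  "provable \<Sigma> (A, B) \<Longrightarrow> provable \<Sigma> (B, D) \<Longrightarrow> provable \<Sigma> (A, D)"
  using provable.Cut[of "{}" \<Sigma> A B D] by simp

lemma provable_Un_right:
  assumes "provable \<Sigma> (A, B1)" "provable \<Sigma> (A, B2)" "finite A" "finite B1" "finite B2"
  shows "provable \<Sigma> (A, B1 \<union> B2)"
proof -
  have "provable \<Sigma> (B2 \<union> B1, B2 \<union> B1)"
    using assms(4,5) by (intro provable_subset) auto
  with assms(2,4) have "provable \<Sigma> (A \<union> B1, B1 \<union> B2)"
    by (metis provable.Cut Un_commute)
  with assms(1,3) show ?thesis
    using provable.Cut[of A \<Sigma> A B1 "B1 \<union> B2"] by (simp add: Un_commute)
qed

definition provable_closure :: "'y fml set \<Rightarrow> 'y tattr set \<Rightarrow> 'y tattr set" where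
  "provable_closure \<Sigma> A = {t. provable \<Sigma> (A, {t})}"

lemma provable_iff_subset_closure:
  assumes "finite A" "finite B"
  shows "provable \<Sigma> (A, B) \<longleftrightarrow> B \<subseteq> provable_closure \<Sigma> A"
proof
  assume "provable \<Sigma> (A, B)"
  then show "B \<subseteq> provable_closure \<Sigma> A"
    using assms(2) by (auto simp: provable_closure_def intro: provable_trans provable_subset)
next
  show "B \<subseteq> provable_closure \<Sigma> A \<Longrightarrow> provable \<Sigma> (A, B)"
    using assms(2)
  proof (induction B rule: finite_induct)
    case empty
    show ?case using assms(1) by (intro provable_subset) auto
  next
    case (insert b B)
    then have "provable \<Sigma> (A, {b} \<union> B)"
      using assms(1) by (intro provable_Un_right) (auto simp: provable_closure_def)
    then show ?case by simp
  qed
qed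

lemma subset_provable_closure: "finite A \<Longrightarrow> A \<subseteq> provable_closure \<Sigma> A"
  using provable_iff_subset_closure provable_subset by blast

lemma provable_closure_model:
  assumes "\<forall>f\<in>\<Sigma>. is_fml f" "finite A" "g \<in> \<Sigma>"
  shows "true_in (provable_closure \<Sigma> A) g"
proof -
  obtain C D where g: "g = (C, D)" by (cases g)
  with assms have fin: "finite C" "finite D" by (auto simp: is_fml_def)
  have "shift D i \<subseteq> provable_closure \<Sigma> A"
    if "shift C i \<subseteq> provable_closure \<Sigma> A" for i
  proof -
    have "provable \<Sigma> (A, shift C i)"
      using that fin assms(2) by (simp add: provable_iff_subset_closure finite_shift)
    moreover have "provable \<Sigma> (shift C i, shift D i)"
      using assms(3) g by (simp add: provable.Hyp provable.Shf)
    ultimately show ?thesis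
      using fin assms(2) by (metis provable_trans provable_iff_subset_closure finite_shift)
  qed
  then show ?thesis by (simp add: true_in_def g)
qed

lemma provable_complete:
  assumes "\<forall>f\<in>\<Sigma>. is_fml f" "finite A" "finite B" "sem_entails \<Sigma> (A, B)"
  shows "provable \<Sigma> (A, B)"
proof -
  have "true_in (provable_closure \<Sigma> A) (A, B)"
    using assms provable_closure_model unfolding sem_entails_def by blast
  then have "B \<subseteq> provable_closure \<Sigma> A"
    using subset_provable_closure[OF assms(2)] unfolding true_in_def
    by (metis fst_conv snd_conv shift_0)
  with assms(2,3) show ?thesis by (simp add: provable_iff_subset_closure)
qed

theorem theorem7:
  fixes \<Sigma> :: "'y fml set" and A B :: "'y tattr set"
  assumes "finite (UNIV :: 'y set)"
    and "\<forall>f\<in>\<Sigma>. is_fml f"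
    and "finite A" and "finite B"
  shows "provable \<Sigma> (A, B) \<longleftrightarrow> sem_entails \<Sigma> (A, B)"
  using provable_sound provable_complete assms(2-4) by blast

end
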